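(* Let $n\ge 13$ and let $CT_n$ be the set of chemical trees on $n$ vertices. For a tree $T$ write $\mathbf m(T)=(m_{3,3}(T),m_{2,3}(T),m_{1,2}(T),m_{1,3}(T),m_{2,2}(T))$. For $1\le i\le 13$ let $A_i$ be the set of trees $T\in CT_n$ with $\Delta(T)\le 3$, $n_3(T)\le 2$ and $\mathbf m(T)$ equal to the following vector: $A_1:(0,0,2,0,n-3)$; $A_2:(0,1,1,2,n-5)$; $A_3:(0,2,2,1,n-6)$; $A_4:(0,3,3,0,n-7)$; $A_5:(0,2,0,4,n-7)$; $A_6:(0,3,1,3,n-8)$; $A_7:(0,4,2,2,n-9)$; $A_8:(1,1,1,3,n-7)$; $A_9:(0,5,3,1,n-10)$; $A_{10}:(1,2,2,2,n-8)$; $A_{11}:(0,6,4,0,n-11)$; $A_{12}:(1,3,3,1,n-9)$; $A_{13}:(1,4,4,0,n-10)$. Let $\Omega(n)$ be the set of trees $T\in CT_n$ having $3$ vertices of degree $3$, $n-8$ vertices of degree $2$ and $5$ vertices of degree $1$, with $m_{1,2}(T)=m_{2,3}(T)=5$, $m_{1,3}(T)=0$, $m_{3,3}(T)=2$, $m_{2,2}(T)=n-13$. Let $T_1\in A_1$, $T_2\in A_4$, $T_3\in A_3$, $T_4\in A_2$, $T_5\in A_{13}$, $T_6\in A_{11}$, $T_7\in A_{12}$, $T_8\in A_9$, $T_9\in A_{10}$, $T_{10}\in A_7$, $T_{11}\in A_8$, $T_{12}\in A_6$, $T_{13}\in A_5$, $T_{14}\in\Omega(n)$, and let $T\in CT_n$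 not belong to $A_1\cup\cdots\cup A_{13}\cup\Omega(n)$. Then $SO(T_1)<SO(T_2)<SO(T_3)<\cdots<SO(T_{13})<SO(T_{14})<SO(T)$.
   Context: All graphs are simple and connected. A chemical graph is a graph with maximum degree at most $4$; a chemical tree is a chemical graph that is a tree. $d_G(u)$ is the degree of $u$, $\Delta(G)$ the maximum degree, $n_i(G)$ the number of vertices of degree $i$, and $m_{i,j}(G)$ the number of edges joining a vertex of degree $i$ to a vertex of degree $j$. The Sombor index is $SO(G)=\sum_{uv\in E(G)}\sqrt{d_G(u)^2+d_G(v)^2}$. *)

theory Defs
  imports Complex_Main
begin

type_synonym 'a graph = "'a set \<times> 'a set set"

definition verts :: "'a graph \<Rightarrow> 'a set" where "verts G = fst G"
definition edges :: "'a graph \<Rightarrow> 'a set set" where "edges G = snd G"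

definition simple_graph :: "'a graph \<Rightarrow> bool" where
  "simple_graph G \<longleftrightarrow> finite (verts G) \<and>
     (\<forall>e\<in>edges G. \<exists>u v. e = {u, v} \<and> u \<noteq> v \<and> u \<in> verts G \<and> v \<in> verts G)"

definition adj :: "'a graph \<Rightarrow> 'a \<Rightarrow> 'a \<Rightarrow> bool" where
  "adj G u v \<longleftrightarrow> {u, v} \<in> edges G"

definition connected_graph :: "'a graph \<Rightarrow> bool" where
  "connected_graph G \<longleftrightarrow> verts G \<noteq> {} \<and>
     (\<forall>u\<in>verts G. \<forall>v\<in>verts G. (adj G)\<^sup>*\<^sup>* u v)"

definition is_cycle :: "'a graph \<Rightarrow> 'a list \<Rightarrow> bool" where
  "is_cycle G vs \<longleftrightarrow> length vs \<ge> 3 \<and> distinct vs \<and> set vs \<subseteq> verts G \<and>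
     (\<forall>i. i + 1 < length vs \<longrightarrow> adj G (vs ! i) (vs ! (i + 1))) \<and>
     adj G (last vs) (hd vs)"

definition acyclic_graph :: "'a graph \<Rightarrow> bool" where
  "acyclic_graph G \<longleftrightarrow> (\<nexists>vs. is_cycle G vs)"

definition is_tree :: "'a graph \<Rightarrow> bool" where
  "is_tree G \<longleftrightarrow> simple_graph G \<and> connected_graph G \<and> acyclic_graph G"

definition deg :: "'a graph \<Rightarrow> 'a \<Rightarrow> nat" where
  "deg G u = card {e \<in> edges G. u \<in> e}"

definition max_deg :: "'a graph \<Rightarrow> nat" where
  "max_deg G = Max (deg G ` verts G)"

definition n_deg :: "'a graph \<Rightarrow> nat \<Rightarrow> nat" where
  "n_deg G i = card {v \<in> verts G. deg G v = i}"

definition m_deg :: "'a graph \<Rightarrow> nat \<Rightarrow> nat \<Rightarrow> nat" where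
  "m_deg G i j = card {e \<in> edges G. \<exists>u v. e = {u, v} \<and> u \<noteq> v \<and> deg G u = i \<and> deg G v = j}"

definition sombor :: "'a graph \<Rightarrow> real" where
  "sombor G = (\<Sum>e\<in>edges G. sqrt (\<Sum>x\<in>e. (real (deg G x))\<^sup>2))"

definition chemical_tree :: "'a graph \<Rightarrow> bool" where
  "chemical_tree G \<longleftrightarrow> is_tree G \<and> (\<forall>v\<in>verts G. deg G v \<le> 4)"

definition CT :: "nat \<Rightarrow> 'a graph set" where
  "CT n = {G. chemical_tree G \<and> card (verts G) = n}"

definition mvec :: "'a graph \<Rightarrow> nat \<times> nat \<times> nat \<times> nat \<times> nat" where
  "mvec G = (m_deg G 3 3, m_deg G 2 3, m_deg G 1 2, m_deg G 1 3, m_deg G 2 2)"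

definition Avec :: "nat \<Rightarrow> nat \<Rightarrow> nat \<times> nat \<times> nat \<times> nat \<times> nat" where
  "Avec n i = [(0,0,2,0,n-3), (0,1,1,2,n-5), (0,2,2,1,n-6), (0,3,3,0,n-7),
               (0,2,0,4,n-7), (0,3,1,3,n-8), (0,4,2,2,n-9), (1,1,1,3,n-7),
               (0,5,3,1,n-10), (1,2,2,2,n-8), (0,6,4,0,n-11), (1,3,3,1,n-9),
               (1,4,4,0,n-10)] ! (i - 1)"

definition A :: "nat \<Rightarrow> nat \<Rightarrow> 'a graph set" where
  "A n i = {T \<in> CT n. max_deg T \<le> 3 \<and> n_deg T 3 \<le> 2 \<and> mvec T = Avec n i}"

definition Omega :: "nat \<Rightarrow> 'a graph set" where
  "Omega n = {T \<in> CT n. n_deg T 3 = 3 \<and> n_deg T 2 = n - 8 \<and> n_deg T 1 = 5 \<and>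
     m_deg T 1 2 = 5 \<and> m_deg T 2 3 = 5 \<and> m_deg T 1 3 = 0 \<and> m_deg T 3 3 = 2 \<and>
     m_deg T 2 2 = n - 13}"

end

(* Since a tree on n vertices has n - 1 edges,
     SO(T) = (n - 1) sqrt 8 + sum over i <= j of m_ij (sqrt (i^2 + j^2) - sqrt 8),
   so only edges of type other than 2-2 matter, and 1-2 edges are the only ones that lower
   the index.  For trees of maximum degree 3 with at most two vertices of degree 3, the
   handshake identities, acyclicity and connectivity leave exactly the edge-count vectors of
   A_1, ..., A_13, and the chain reduces to comparing finitely many numbers.  Any other
   chemical tree has a vertex of degree 4, at least four vertices of degree 3, or three of
   them without lying in Omega(n); bounding each sqrt (i^2 + j^2) - sqrt 8 below by a
   rational and using n_1 = n_3 + 2 n_4 + 2 then gives a linear bound that exceeds the value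
   on Omega(n). *)

theory Submission
  imports Defs
begin

section \<open>Simple graphs and trees\<close>

lemma simple_graph_edgeE:
  assumes "simple_graph G" "e \<in> edges G"
  obtains u v where "e = {u, v}" "u \<noteq> v" "u \<in> verts G" "v \<in> verts G"
  using assms unfolding simple_graph_def by blast

lemma simple_graph_edge_otherE:
  assumes "simple_graph G" "e \<in> edges G" "x \<in> e"
  obtains y where "e = {x, y}" "y \<noteq> x" "y \<in> verts G"
proof -
  obtain u v where uv: "e = {u, v}" "u \<noteq> v" "u \<in> verts G" "v \<in> verts G"
    using simple_graph_edgeE[OF assms(1,2)] .
  then consider "x = u" | "x = v" using assms(3) by blast
  then show ?thesis
  proof cases
    case 1
    then show ?thesis using that[of v] uv by blast
  next
    case 2
    then show ?thesis using that[of u] uv by (simp add: insert_commute)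
  qed
qed

lemma simple_graph_finite_verts: "simple_graph G \<Longrightarrow> finite (verts G)"
  unfolding simple_graph_def by blast

lemma simple_graph_edge_subset: "simple_graph G \<Longrightarrow> e \<in> edges G \<Longrightarrow> e \<subseteq> verts G"
  by (erule simple_graph_edgeE) auto

lemma simple_graph_finite_edges: "simple_graph G \<Longrightarrow> finite (edges G)"
  by (meson PowI finite_Pow_iff rev_finite_subset simple_graph_edge_subset
      simple_graph_finite_verts subsetI)

lemma sum_deg_eq_sum_edges:
  fixes g :: "'a \<Rightarrow> 'b::comm_semiring_1"
  assumes G: "simple_graph G"
  shows "(\<Sum>v\<in>verts G. of_nat (deg G v) * g v) = (\<Sum>e\<in>edges G. \<Sum>x\<in>e. g x)"
proof -
  have "(\<Sum>v\<in>verts G. of_nat (deg G v) * g v) = (\<Sum>v\<in>verts G. \<Sum>e\<in>{e \<in> edges G. v \<in> e}. g v)"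
    by (simp add: deg_def)
  also have "\<dots> = (\<Sum>e\<in>edges G. \<Sum>v\<in>{v \<in> verts G. v \<in> e}. g v)"
    using G by (intro sum.swap_restrict simple_graph_finite_verts simple_graph_finite_edges)
  also have "\<dots> = (\<Sum>e\<in>edges G. \<Sum>x\<in>e. g x)"
  proof (rule sum.cong[OF refl])
    fix e assume "e \<in> edges G"
    then have "{v \<in> verts G. v \<in> e} = e" using simple_graph_edge_subset[OF G] by blast
    then show "(\<Sum>v\<in>{v \<in> verts G. v \<in> e}. g v) = (\<Sum>x\<in>e. g x)" by simp
  qed
  finally show ?thesis .
qed

lemma connected_graph_closed:
  assumes "connected_graph G" "x \<in> verts G" "y \<in> verts G" "P x"
    and "\<And>u v. adj G u v \<Longrightarrow> P u \<Longrightarrow> P v"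
  shows "P y"
proof -
  have "(adj G)\<^sup>*\<^sup>* x y" using assms(1-3) unfolding connected_graph_def by blast
  then show ?thesis by induction (use assms in auto)
qed

lemma connected_deg_pos:
  assumes G: "simple_graph G" "connected_graph G" and two: "2 \<le> card (verts G)"
    and x: "x \<in> verts G"
  shows "0 < deg G x"
proof (rule ccontr)
  assume "\<not> 0 < deg G x"
  then have isolated: "\<not> adj G x v" for v
    using simple_graph_finite_edges[OF G(1)] unfolding deg_def adj_def by auto
  have "verts G \<subseteq> {x}"
    using connected_graph_closed[OF G(2) x, of _ "\<lambda>v. v = x"] isolated by blast
  then have "card (verts G) \<le> 1" using card_mono[of "{x}"] by simp
  with two show False by simp
qed

definition is_path :: "'a graph \<Rightarrow> 'a list \<Rightarrow> bool" where
  "is_path G xs \<longleftrightarrow> distinct xs \<and> set xs \<subseteq> verts G \<and>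
     (\<forall>i. i + 1 < length xs \<longrightarrow> adj G (xs ! i) (xs ! (i + 1)))"

lemma ex_longest_path:
  assumes "simple_graph G" "is_path G ys"
  obtains xs where "is_path G xs" "length ys \<le> length xs"
    "\<And>zs. is_path G zs \<Longrightarrow> length zs \<le> length xs"
proof -
  have "length zs \<le> card (verts G)" if "is_path G zs" for zs
    using that simple_graph_finite_verts[OF assms(1)] unfolding is_path_def
    by (metis card_mono distinct_card)
  then have "\<forall>zs. is_path G zs \<longrightarrow> length zs < Suc (card (verts G))" by (simp add: less_Suc_eq_le)
  then obtain xs where "is_path G xs" "\<forall>zs. is_path G zs \<longrightarrow> length zs \<le> length xs"
    using Lattices_Big.ex_has_greatest_nat[of "is_path G" ys length] assms(2) by blast
  then show ?thesis using that assms(2) by blast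
qed

lemma longest_path_hd_neighbour:
  assumes G: "simple_graph G" and xs: "is_path G xs" "xs \<noteq> []"
    and longest: "\<And>zs. is_path G zs \<Longrightarrow> length zs \<le> length xs"
    and e: "{xs ! 0, w} \<in> edges G"
  shows "w \<in> set xs"
proof (rule ccontr)
  assume "w \<notin> set xs"
  have "w \<in> verts G" using simple_graph_edge_subset[OF G e] by blast
  moreover have "adj G ((w # xs) ! i) ((w # xs) ! (i + 1))" if "i + 1 < length (w # xs)" for i
  proof (cases i)
    case 0
    then show ?thesis using e unfolding adj_def by (simp add: insert_commute)
  next
    case (Suc j)
    then show ?thesis using that xs(1) unfolding is_path_def by simp
  qed
  ultimately have "is_path G (w # xs)"
    using xs(1) \<open>w \<notin> set xs\<close> unfolding is_path_def by simp
  then show False using longest[of "w # xs"] by simp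
qed

lemma acyclic_path_chord_hd:
  assumes "acyclic_graph G" "is_path G xs" "k < length xs" "k \<noteq> 0"
    and chord: "{xs ! k, xs ! 0} \<in> edges G"
  shows "k = 1"
proof (rule ccontr)
  assume "k \<noteq> 1"
  let ?cs = "take (k + 1) xs"
  have "last ?cs = xs ! k" using assms(3) by (simp add: take_Suc_conv_app_nth)
  moreover have "hd ?cs = xs ! 0" using assms(3) by (cases xs) auto
  ultimately have "adj G (last ?cs) (hd ?cs)" using chord unfolding adj_def by simp
  moreover have "adj G (?cs ! i) (?cs ! (i + 1))" if "i + 1 < length ?cs" for i
    using that assms(2) unfolding is_path_def by simp
  moreover have "3 \<le> length ?cs" "distinct ?cs" "set ?cs \<subseteq> verts G"
    using assms(2-4) \<open>k \<noteq> 1\<close> set_take_subset[of "k + 1" xs] unfolding is_path_def by auto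
  ultimately have "is_cycle G ?cs" unfolding is_cycle_def by blast
  then show False using assms(1) unfolding acyclic_graph_def by blast
qed

lemma longest_path_hd_leaf:
  assumes G: "simple_graph G" "acyclic_graph G"
    and xs: "is_path G xs" "2 \<le> length xs" and longest: "\<And>zs. is_path G zs \<Longrightarrow> length zs \<le> length xs"
  shows "deg G (xs ! 0) = 1"
proof -
  have "\<forall>i. i + 1 < length xs \<longrightarrow> adj G (xs ! i) (xs ! (i + 1))"
    using xs(1) unfolding is_path_def by blast
  from spec[OF this, of 0] have first: "{xs ! 0, xs ! 1} \<in> edges G"
    using xs(2) unfolding adj_def by simp
  have "e = {xs ! 0, xs ! 1}" if e: "e \<in> edges G" "xs ! 0 \<in> e" for e
  proof -
    obtain w where w: "e = {xs ! 0, w}" "w \<noteq> xs ! 0"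
      using simple_graph_edge_otherE[OF G(1) e] by blast
    have "xs \<noteq> []" using xs(2) by auto
    moreover have "{xs ! 0, w} \<in> edges G" using e(1) w(1) by simp
    ultimately have "w \<in> set xs" using longest_path_hd_neighbour[OF G(1) xs(1) _ longest] by blast
    then obtain k where k: "k < length xs" "xs ! k = w" by (metis in_set_conv_nth)
    have "k \<noteq> 0"
    proof
      assume "k = 0"
      then show False using k(2) w(2) by simp
    qed
    moreover have "{xs ! k, xs ! 0} \<in> edges G" using e(1) w(1) k(2) by (simp add: insert_commute)
    ultimately have "k = 1" by (rule acyclic_path_chord_hd[OF G(2) xs(1) k(1)])
    then show ?thesis using k w(1) by simp
  qed
  then have "{e \<in> edges G. xs ! 0 \<in> e} = {{xs ! 0, xs ! 1}}" using first by blast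
  then show ?thesis unfolding deg_def by simp
qed

lemma acyclic_graph_has_leaf:
  assumes G: "simple_graph G" "acyclic_graph G" and "edges G \<noteq> {}"
  obtains l where "l \<in> verts G" "deg G l = 1"
proof -
  obtain e where "e \<in> edges G" using assms(3) by blast
  then obtain a b where "e = {a, b}" "a \<noteq> b" "a \<in> verts G" "b \<in> verts G"
    by (rule simple_graph_edgeE[OF G(1)])
  then have "is_path G [a, b]" using \<open>e \<in> edges G\<close> unfolding is_path_def adj_def
    by (auto simp: less_Suc_eq)
  then obtain xs where xs: "is_path G xs" "length [a, b] \<le> length xs"
      "\<And>zs. is_path G zs \<Longrightarrow> length zs \<le> length xs"
    using ex_longest_path[OF G(1)] by blast
  then have "2 \<le> length xs" by simp
  note xs = xs(1) this xs(3)
  have "xs ! 0 \<in> set xs" using xs(2) by (intro nth_mem) linarith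
  then have "xs ! 0 \<in> verts G" using xs(1) unfolding is_path_def by blast
  then show ?thesis using that longest_path_hd_leaf[OF G xs] by blast
qed

lemma is_cycle_subgraph:
  assumes "is_cycle H vs" "verts H \<subseteq> verts G" "edges H \<subseteq> edges G"
  shows "is_cycle G vs"
  using assms unfolding is_cycle_def adj_def by blast

lemma connected_delete_leaf:
  assumes G: "simple_graph G" "connected_graph G" and leaf: "{e' \<in> edges G. l \<in> e'} = {e}"
  shows "connected_graph (verts G - {l}, edges G - {e})" (is "connected_graph ?H")
  unfolding connected_graph_def
proof (intro conjI ballI)
  have e: "e \<in> edges G" "l \<in> e" using leaf by auto
  obtain p where p: "e = {l, p}" "p \<noteq> l" "p \<in> verts G"
    using simple_graph_edge_otherE[OF G(1) e] by blast
  have V: "verts ?H = verts G - {l}" and E: "edges ?H = edges G - {e}"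
    by (simp_all add: verts_def edges_def)
  show "verts ?H \<noteq> {}" using p V by auto
  fix x y assume xy: "x \<in> verts ?H" "y \<in> verts ?H"
  define f where "f v = (if v = l then p else v)" for v
  have "(adj ?H)\<^sup>*\<^sup>* (f x) (f y)"
  proof (rule connected_graph_closed[OF G(2), of x y "\<lambda>v. (adj ?H)\<^sup>*\<^sup>* (f x) (f v)"])
    fix u v assume "adj G u v" "(adj ?H)\<^sup>*\<^sup>* (f x) (f u)"
    moreover have "f u = f v \<or> adj ?H (f u) (f v)"
    proof (cases "{u, v} = e")
      case True
      then have "u = l \<and> v = p \<or> u = p \<and> v = l" using p(1) by (simp add: doubleton_eq_iff)
      then show ?thesis using p(2) unfolding f_def by auto
    next
      case False
      have uv: "{u, v} \<in> edges G" using \<open>adj G u v\<close> unfolding adj_def .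
      have "l \<notin> {u, v}"
      proof
        assume "l \<in> {u, v}"
        then have "{u, v} \<in> {e' \<in> edges G. l \<in> e'}" using uv by blast
        then show False unfolding leaf using False by simp
      qed
      then have "f u = u" "f v = v" unfolding f_def by auto
      then show ?thesis using uv False unfolding adj_def E by simp
    qed
    ultimately show "(adj ?H)\<^sup>*\<^sup>* (f x) (f v)" by (metis rtranclp.rtrancl_into_rtrancl)
  qed (use xy V in auto)
  moreover have "f x = x" "f y = y" using xy V unfolding f_def by auto
  ultimately show "(adj ?H)\<^sup>*\<^sup>* x y" by simp
qed

lemma tree_delete_leaf:
  assumes T: "is_tree G" and leaf: "{e' \<in> edges G. l \<in> e'} = {e}"
  shows "is_tree (verts G - {l}, edges G - {e})" (is "is_tree ?H")
proof -
  have G: "simple_graph G" "connected_graph G" "acyclic_graph G" using T unfolding is_tree_def by auto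
  have V: "verts ?H = verts G - {l}" and E: "edges ?H = edges G - {e}"
    by (simp_all add: verts_def edges_def)
  have "simple_graph ?H"
    unfolding simple_graph_def
  proof (intro conjI ballI)
    show "finite (verts ?H)" using simple_graph_finite_verts[OF G(1)] V by simp
    fix e' assume e': "e' \<in> edges ?H"
    then have "e' \<in> edges G" "l \<notin> e'" using leaf E by auto
    then show "\<exists>u v. e' = {u, v} \<and> u \<noteq> v \<and> u \<in> verts ?H \<and> v \<in> verts ?H"
      using simple_graph_edgeE[OF G(1)] V by (metis Diff_iff insertCI singletonD)
  qed
  moreover have "acyclic_graph ?H"
    using G(3) is_cycle_subgraph[of ?H _ G] V E unfolding acyclic_graph_def by blast
  ultimately show ?thesis
    using connected_delete_leaf[OF G(1,2) leaf] unfolding is_tree_def by blast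
qed

lemma tree_card_edges:
  "is_tree G \<Longrightarrow> card (edges G) + 1 = card (verts G)"
proof (induction "card (verts G)" arbitrary: G rule: less_induct)
  case less
  have G: "simple_graph G" "connected_graph G" "acyclic_graph G"
    using less.prems unfolding is_tree_def by auto
  have fin: "finite (verts G)" "finite (edges G)"
    using simple_graph_finite_verts[OF G(1)] simple_graph_finite_edges[OF G(1)] by auto
  show ?case
  proof (cases "edges G = {}")
    case True
    then have "\<not> 0 < deg G v" for v unfolding deg_def by simp
    then have "card (verts G) < 2" using connected_deg_pos[OF G(1,2)] G(2)
      unfolding connected_graph_def by (meson not_le_imp_less ex_in_conv)
    moreover have "card (verts G) \<noteq> 0" using G(2) fin(1) unfolding connected_graph_def by simp
    ultimately show ?thesis using True by simp
  next
    case False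
    obtain l where l: "l \<in> verts G" "deg G l = 1"
      using acyclic_graph_has_leaf[OF G(1,3) False] .
    obtain e where e: "{e' \<in> edges G. l \<in> e'} = {e}"
      using l(2) unfolding deg_def by (rule card_1_singletonE)
    let ?H = "(verts G - {l}, edges G - {e})"
    have "e \<in> edges G" using e by blast
    then have card_H: "card (verts ?H) = card (verts G) - 1" "card (edges ?H) = card (edges G) - 1"
      using l(1) fin by (simp_all add: verts_def edges_def)
    have "0 < card (verts G)" "0 < card (edges G)"
      using l(1) \<open>e \<in> edges G\<close> fin card_gt_0_iff by blast+
    then have "card (edges ?H) + 1 = card (verts ?H)"
      using less.hyps[OF _ tree_delete_leaf[OF less.prems e]] card_H by simp
    then show ?thesis using card_H \<open>0 < card (edges G)\<close> by simp
  qed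
qed

lemma chemical_tree_deg_range:
  assumes "chemical_tree G" "2 \<le> card (verts G)"
  shows "deg G ` verts G \<subseteq> {1..4}"
  using assms connected_deg_pos[of G] unfolding chemical_tree_def is_tree_def
  by (auto simp: Suc_le_eq)

section \<open>Edge types\<close>

definition edge_type :: "'a graph \<Rightarrow> 'a set \<Rightarrow> nat \<times> nat" where
  "edge_type G e = (Min (deg G ` e), Max (deg G ` e))"

lemma edge_type_doubleton:
  "edge_type G {u, v} = (min (deg G u) (deg G v), max (deg G u) (deg G v))"
  unfolding edge_type_def by auto

lemma sum_edge_deg:
  assumes "simple_graph G" "e \<in> edges G"
  shows "(\<Sum>x\<in>e. f (deg G x)) = f (fst (edge_type G e)) + f (snd (edge_type G e))"
proof -
  obtain u v where "e = {u, v}" "u \<noteq> v" using simple_graph_edgeE[OF assms] by metis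
  then show ?thesis
    by (cases "deg G u \<le> deg G v") (simp_all add: edge_type_doubleton min_def max_def add.commute)
qed

lemma m_deg_eq_card_edge_type:
  assumes G: "simple_graph G" and "i \<le> j"
  shows "m_deg G i j = card {e \<in> edges G. edge_type G e = (i, j)}"
  unfolding m_deg_def
proof (intro arg_cong[where f = card] Collect_cong conj_cong refl)
  fix e assume "e \<in> edges G"
  then obtain a b where ab: "e = {a, b}" "a \<noteq> b" using simple_graph_edgeE[OF G] by metis
  have "(\<exists>u v. e = {u, v} \<and> u \<noteq> v \<and> deg G u = i \<and> deg G v = j) \<longleftrightarrow>
      deg G a = i \<and> deg G b = j \<or> deg G b = i \<and> deg G a = j"
    using ab by (auto simp: doubleton_eq_iff)
  also have "\<dots> \<longleftrightarrow> edge_type G e = (i, j)"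
    using ab \<open>i \<le> j\<close> by (auto simp: edge_type_doubleton min_def max_def)
  finally show "(\<exists>u v. e = {u, v} \<and> u \<noteq> v \<and> deg G u = i \<and> deg G v = j) \<longleftrightarrow> edge_type G e = (i, j)" .
qed

lemma m_deg_pos:
  assumes "simple_graph G" "{u, v} \<in> edges G" "u \<noteq> v"
  shows "0 < m_deg G (deg G u) (deg G v)"
proof -
  have "{u, v} \<in> {e \<in> edges G. \<exists>x y. e = {x, y} \<and> x \<noteq> y \<and> deg G x = deg G u \<and> deg G y = deg G v}"
    using assms(2,3) by blast
  then show ?thesis
    unfolding m_deg_def using simple_graph_finite_edges[OF assms(1)] card_gt_0_iff by fastforce
qed

definition chemical_edge_types :: "(nat \<times> nat) set" where
  "chemical_edge_types = {(1,1), (1,2), (1,3), (1,4), (2,2), (2,3), (2,4), (3,3), (3,4), (4,4)}"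

lemma edge_type_chemical:
  assumes "simple_graph G" "deg G ` verts G \<subseteq> {1..4}" "e \<in> edges G"
  shows "edge_type G e \<in> chemical_edge_types"
proof -
  obtain u v where uv: "e = {u, v}" "u \<in> verts G" "v \<in> verts G"
    using simple_graph_edgeE[OF assms(1,3)] by metis
  have "d \<in> {1..4} \<Longrightarrow> d = 1 \<or> d = 2 \<or> d = 3 \<or> d = 4" for d :: nat
    unfolding atLeastAtMost_iff by presburger
  then have "deg G u = 1 \<or> deg G u = 2 \<or> deg G u = 3 \<or> deg G u = 4"
    "deg G v = 1 \<or> deg G v = 2 \<or> deg G v = 3 \<or> deg G v = 4"
    using uv assms(2) by blast+
  then show ?thesis
    unfolding uv(1) edge_type_doubleton chemical_edge_types_def
    by (elim disjE) (simp_all add: min_def max_def)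
qed

lemma sum_edges_by_type:
  fixes \<phi> :: "nat \<times> nat \<Rightarrow> 'b::comm_semiring_1"
  assumes G: "simple_graph G" "deg G ` verts G \<subseteq> {1..4}"
  shows "(\<Sum>e\<in>edges G. \<phi> (edge_type G e)) =
    (\<Sum>(i, j)\<in>chemical_edge_types. of_nat (m_deg G i j) * \<phi> (i, j))"
proof -
  have types: "edge_type G ` edges G \<subseteq> chemical_edge_types"
    using edge_type_chemical[OF G] by blast
  have "finite chemical_edge_types" by (simp add: chemical_edge_types_def)
  then have "(\<Sum>e\<in>edges G. \<phi> (edge_type G e)) =
      (\<Sum>t\<in>chemical_edge_types. \<Sum>e\<in>{e \<in> edges G. edge_type G e = t}. \<phi> (edge_type G e))"
    by (rule sum.group[OF simple_graph_finite_edges[OF G(1)] _ types, symmetric])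
  also have "\<dots> = (\<Sum>t\<in>chemical_edge_types. of_nat (card {e \<in> edges G. edge_type G e = t}) * \<phi> t)"
    by (intro sum.cong) auto
  also have "\<dots> = (\<Sum>(i, j)\<in>chemical_edge_types. of_nat (m_deg G i j) * \<phi> (i, j))"
    using m_deg_eq_card_edge_type[OF G(1)] by (intro sum.cong) (auto simp: chemical_edge_types_def)
  finally show ?thesis .
qed

lemma card_verts_by_deg:
  assumes G: "simple_graph G" "deg G ` verts G \<subseteq> {1..4}"
  shows "n_deg G 1 + n_deg G 2 + n_deg G 3 + n_deg G 4 = card (verts G)"
proof -
  have "{1..4::nat} = {1, 2, 3, 4}" by (auto; presburger)
  then show ?thesis
    using sum.group[OF simple_graph_finite_verts[OF G(1)] _ G(2), of "\<lambda>_. 1::nat"] by (simp add: n_deg_def)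
qed

lemma handshake_deg:
  assumes G: "simple_graph G" "deg G ` verts G \<subseteq> {1..4}"
  shows "i * n_deg G i =
    (\<Sum>(p, q)\<in>chemical_edge_types. m_deg G p q * (of_bool (p = i) + of_bool (q = i)))"
proof -
  have "i * n_deg G i = (\<Sum>v\<in>verts G. deg G v * of_bool (deg G v = i))"
    using simple_graph_finite_verts[OF G(1)] by (simp add: n_deg_def sum.If_cases Int_def)
  also have "\<dots> = (\<Sum>e\<in>edges G. \<Sum>x\<in>e. of_bool (deg G x = i))"
    using sum_deg_eq_sum_edges[OF G(1), of "\<lambda>x. of_bool (deg G x = i) :: nat"] by simp
  also have "\<dots> = (\<Sum>e\<in>edges G. of_bool (fst (edge_type G e) = i) + of_bool (snd (edge_type G e) = i))"
    using sum_edge_deg[OF G(1), of _ "\<lambda>d. of_bool (d = i) :: nat"] by (intro sum.cong refl) simp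
  also have "\<dots> = (\<Sum>(p, q)\<in>chemical_edge_types. m_deg G p q * (of_bool (p = i) + of_bool (q = i)))"
    using sum_edges_by_type[OF G, of "\<lambda>t. of_bool (fst t = i) + of_bool (snd t = i) :: nat"] by simp
  finally show ?thesis .
qed

lemma sombor_by_edge_type:
  assumes G: "simple_graph G" "deg G ` verts G \<subseteq> {1..4}"
  shows "sombor G = (\<Sum>(i, j)\<in>chemical_edge_types. m_deg G i j * sqrt ((real i)\<^sup>2 + (real j)\<^sup>2))"
proof -
  have "sombor G = (\<Sum>e\<in>edges G. sqrt ((real (fst (edge_type G e)))\<^sup>2 + (real (snd (edge_type G e)))\<^sup>2))"
    unfolding sombor_def using sum_edge_deg[OF G(1), of _ "\<lambda>d. (real d)\<^sup>2"] by (intro sum.cong refl) simp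
  also have "\<dots> = (\<Sum>(i, j)\<in>chemical_edge_types. m_deg G i j * sqrt ((real i)\<^sup>2 + (real j)\<^sup>2))"
    using sum_edges_by_type[OF G, of "\<lambda>t. sqrt ((real (fst t))\<^sup>2 + (real (snd t))\<^sup>2)"] by simp
  finally show ?thesis .
qed

section \<open>Degree counts of chemical trees\<close>

lemma deg_1_edges:
  assumes "deg G x = 1" "e \<in> edges G" "x \<in> e"
  shows "{e' \<in> edges G. x \<in> e'} = {e}"
proof -
  obtain a where a: "{e' \<in> edges G. x \<in> e'} = {a}"
    using assms(1) unfolding deg_def by (rule card_1_singletonE)
  moreover have "e \<in> {e' \<in> edges G. x \<in> e'}" using assms(2,3) by simp
  ultimately show ?thesis by simp
qed

lemma connected_no_11_edge:
  assumes G: "simple_graph G" "connected_graph G" and three: "3 \<le> card (verts G)"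
  shows "m_deg G 1 1 = 0"
proof (rule ccontr)
  assume "m_deg G 1 1 \<noteq> 0"
  then have "{e \<in> edges G. \<exists>u v. e = {u, v} \<and> u \<noteq> v \<and> deg G u = 1 \<and> deg G v = 1} \<noteq> {}"
    unfolding m_deg_def by (metis card.empty)
  then obtain u v where uv: "{u, v} \<in> edges G" "u \<noteq> v" "deg G u = 1" "deg G v = 1"
    by blast
  have u: "u \<in> verts G" using simple_graph_edge_subset[OF G(1) uv(1)] by blast
  have closed: "z \<in> {u, v}" if "adj G w z" "w \<in> {u, v}" for w z
  proof -
    have "{e' \<in> edges G. w \<in> e'} = {{u, v}}"
      using that(2) uv by (intro deg_1_edges) auto
    moreover have "{w, z} \<in> {e' \<in> edges G. w \<in> e'}" using that(1) unfolding adj_def by simp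
    ultimately show ?thesis by (auto simp: doubleton_eq_iff)
  qed
  have "verts G \<subseteq> {u, v}"
    using connected_graph_closed[OF G(2) u, of _ "\<lambda>w. w \<in> {u, v}"] closed by blast
  then have "card (verts G) \<le> 2"
    using card_mono[of "{u, v}" "verts G"] uv(2) by simp
  with three show False by simp
qed

lemma chemical_tree_counts:
  assumes T: "chemical_tree G" "3 \<le> card (verts G)"
  shows "m_deg G 1 2 + m_deg G 1 3 + m_deg G 1 4 + m_deg G 2 2 + m_deg G 2 3 + m_deg G 2 4 +
      m_deg G 3 3 + m_deg G 3 4 + m_deg G 4 4 + 1 = card (verts G)"
    and "n_deg G 1 + n_deg G 2 + n_deg G 3 + n_deg G 4 = card (verts G)"
    and "n_deg G 1 = m_deg G 1 2 + m_deg G 1 3 + m_deg G 1 4"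
    and "2 * n_deg G 2 = m_deg G 1 2 + 2 * m_deg G 2 2 + m_deg G 2 3 + m_deg G 2 4"
    and "3 * n_deg G 3 = m_deg G 1 3 + m_deg G 2 3 + 2 * m_deg G 3 3 + m_deg G 3 4"
    and "4 * n_deg G 4 = m_deg G 1 4 + m_deg G 2 4 + m_deg G 3 4 + 2 * m_deg G 4 4"
proof -
  have tree: "is_tree G" and G: "simple_graph G" "connected_graph G"
    using T(1) unfolding chemical_tree_def is_tree_def by auto
  have range: "deg G ` verts G \<subseteq> {1..4}" using T by (intro chemical_tree_deg_range) auto
  have m11: "m_deg G 1 1 = 0" using connected_no_11_edge[OF G T(2)] .
  note handshake = handshake_deg[OF G(1) range]
  have "card (edges G) = (\<Sum>e\<in>edges G. 1::nat)" by simp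
  then show "m_deg G 1 2 + m_deg G 1 3 + m_deg G 1 4 + m_deg G 2 2 + m_deg G 2 3 + m_deg G 2 4 +
      m_deg G 3 3 + m_deg G 3 4 + m_deg G 4 4 + 1 = card (verts G)"
    using sum_edges_by_type[OF G(1) range, of "\<lambda>_. 1::nat"] tree_card_edges[OF tree] m11
    by (simp add: chemical_edge_types_def)
  show "n_deg G 1 + n_deg G 2 + n_deg G 3 + n_deg G 4 = card (verts G)"
    using card_verts_by_deg[OF G(1) range] .
  show "n_deg G 1 = m_deg G 1 2 + m_deg G 1 3 + m_deg G 1 4"
    using handshake[of 1] m11 by (simp add: chemical_edge_types_def)
  show "2 * n_deg G 2 = m_deg G 1 2 + 2 * m_deg G 2 2 + m_deg G 2 3 + m_deg G 2 4"
    using handshake[of 2] by (simp add: chemical_edge_types_def)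
  show "3 * n_deg G 3 = m_deg G 1 3 + m_deg G 2 3 + 2 * m_deg G 3 3 + m_deg G 3 4"
    using handshake[of 3] by (simp add: chemical_edge_types_def)
  show "4 * n_deg G 4 = m_deg G 1 4 + m_deg G 2 4 + m_deg G 3 4 + 2 * m_deg G 4 4"
    using handshake[of 4] by (simp add: chemical_edge_types_def)
qed

lemma chemical_tree_n_deg_1:
  assumes "chemical_tree G" "3 \<le> card (verts G)"
  shows "n_deg G 1 = n_deg G 3 + 2 * n_deg G 4 + 2"
  using chemical_tree_counts[OF assms] by linarith

lemma sombor_chemical_tree:
  assumes T: "chemical_tree G" "3 \<le> card (verts G)"
  shows "sombor G = (real (card (verts G)) - 1) * sqrt 8 +
    (m_deg G 1 2 * (sqrt 5 - sqrt 8) + m_deg G 1 3 * (sqrt 10 - sqrt 8) +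
     m_deg G 1 4 * (sqrt 17 - sqrt 8) + m_deg G 2 3 * (sqrt 13 - sqrt 8) +
     m_deg G 2 4 * (sqrt 20 - sqrt 8) + m_deg G 3 3 * (sqrt 18 - sqrt 8) +
     m_deg G 3 4 * (5 - sqrt 8) + m_deg G 4 4 * (sqrt 32 - sqrt 8))"
proof -
  have G: "simple_graph G" "connected_graph G" using T(1) unfolding chemical_tree_def is_tree_def by auto
  have range: "deg G ` verts G \<subseteq> {1..4}" using T by (intro chemical_tree_deg_range) auto
  have "real (card (verts G)) - 1 = real (m_deg G 1 2) + m_deg G 1 3 + m_deg G 1 4 + m_deg G 2 2 +
      m_deg G 2 3 + m_deg G 2 4 + m_deg G 3 3 + m_deg G 3 4 + m_deg G 4 4"
    unfolding chemical_tree_counts(1)[OF T, symmetric] by simp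
  moreover have "sombor G = m_deg G 1 2 * sqrt 5 + m_deg G 1 3 * sqrt 10 + m_deg G 1 4 * sqrt 17 +
      m_deg G 2 2 * sqrt 8 + m_deg G 2 3 * sqrt 13 + m_deg G 2 4 * sqrt 20 + m_deg G 3 3 * sqrt 18 +
      m_deg G 3 4 * 5 + m_deg G 4 4 * sqrt 32"
    using sombor_by_edge_type[OF G(1) range] connected_no_11_edge[OF G T(2)]
    by (simp add: chemical_edge_types_def power2_eq_square real_sqrt_eq_iff)
  ultimately show ?thesis by (simp add: algebra_simps)
qed

lemma m_deg_same_subset:
  assumes "simple_graph G"
  shows "{e \<in> edges G. \<exists>u v. e = {u, v} \<and> u \<noteq> v \<and> deg G u = i \<and> deg G v = i}
    \<subseteq> {B. B \<subseteq> {v \<in> verts G. deg G v = i} \<and> card B = 2}"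
  using simple_graph_edge_subset[OF assms] by fastforce

lemma m_deg_same_le:
  assumes G: "simple_graph G"
  shows "m_deg G i i \<le> n_deg G i choose 2"
proof -
  have fin: "finite {v \<in> verts G. deg G v = i}" using simple_graph_finite_verts[OF G] by simp
  have "m_deg G i i \<le> card {B. B \<subseteq> {v \<in> verts G. deg G v = i} \<and> card B = 2}"
    unfolding m_deg_def using m_deg_same_subset[OF G] fin by (intro card_mono) auto
  then show ?thesis unfolding n_deg_def n_subsets[OF fin] .
qed

text \<open>Three vertices of degree \<open>i\<close> spanning three edges would form a triangle.\<close>

lemma acyclic_m_deg_same_le_2:
  assumes G: "simple_graph G" "acyclic_graph G" and three: "n_deg G i = 3"
  shows "m_deg G i i \<le> 2"
proof (rule ccontr)
  let ?Vi = "{v \<in> verts G. deg G v = i}"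
  let ?pairs = "{B. B \<subseteq> ?Vi \<and> card B = 2}"
  assume "\<not> m_deg G i i \<le> 2"
  moreover have "m_deg G i i \<le> 3" using m_deg_same_le[OF G(1), of i] three by (simp add: numeral_eq_Suc)
  ultimately have "m_deg G i i = card ?pairs"
    using n_subsets[of ?Vi 2] three simple_graph_finite_verts[OF G(1)]
    by (simp add: n_deg_def numeral_eq_Suc)
  then have all_pairs: "?pairs \<subseteq> edges G"
    using card_subset_eq[OF _ m_deg_same_subset[OF G(1)]] simple_graph_finite_verts[OF G(1)]
    unfolding m_deg_def by auto
  obtain a b c where abc: "?Vi = {a, b, c}" "a \<noteq> b" "b \<noteq> c" "a \<noteq> c"
    using three unfolding n_deg_def card_3_iff by blast
  then have "{a, b} \<in> edges G" "{b, c} \<in> edges G" "{c, a} \<in> edges G"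
    using all_pairs by auto
  moreover have "{a, b, c} \<subseteq> verts G" using abc(1) by blast
  ultimately have "is_cycle G [a, b, c]"
    using abc(2-4) unfolding is_cycle_def adj_def by (auto simp: less_Suc_eq insert_commute)
  then show False using G(2) unfolding acyclic_graph_def by blast
qed

lemma m_deg_same_eq_0:
  assumes "simple_graph G" "n_deg G i \<le> 1"
  shows "m_deg G i i = 0"
  using m_deg_same_le[OF assms(1), of i] assms(2) by (simp add: binomial_eq_0)

lemma chemical_tree_deg_2_closed:
  assumes T: "chemical_tree G" "2 \<le> card (verts G)"
    and no_boundary: "m_deg G 1 2 = 0" "m_deg G 2 3 = 0" "m_deg G 2 4 = 0"
  shows "n_deg G 2 = 0 \<or> n_deg G 2 = card (verts G)"
proof -
  have G: "simple_graph G" "connected_graph G" using T(1) unfolding chemical_tree_def is_tree_def by auto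
  have range: "deg G ` verts G \<subseteq> {1..4}" using chemical_tree_deg_range[OF T] .
  have step: "deg G v = 2" if "adj G u v" "deg G u = 2" for u v
  proof (rule ccontr)
    assume "deg G v \<noteq> 2"
    have uv: "{u, v} \<in> edges G" "{v, u} \<in> edges G" using that(1) unfolding adj_def by (auto simp: insert_commute)
    then obtain x y where "{u, v} = {x, y}" "x \<noteq> y" "x \<in> verts G" "y \<in> verts G"
      using simple_graph_edgeE[OF G(1)] by metis
    then have "u \<noteq> v" "v \<in> verts G" by (auto simp: doubleton_eq_iff)
    then have "deg G v \<in> {1..4}" using range by blast
    then show False
      using m_deg_pos[OF G(1) uv(1) \<open>u \<noteq> v\<close>] m_deg_pos[OF G(1) uv(2) \<open>u \<noteq> v\<close>[symmetric]]
        that(2) \<open>deg G v \<noteq> 2\<close> no_boundary by (auto simp: atLeastAtMost_iff le_Suc_eq numeral_eq_Suc)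
  qed
  show ?thesis
  proof (cases "n_deg G 2 = 0")
    case False
    then have "{v \<in> verts G. deg G v = 2} \<noteq> {}" unfolding n_deg_def by (metis card.empty)
    then obtain x where x: "x \<in> verts G" "deg G x = 2" by blast
    have "{v \<in> verts G. deg G v = 2} = verts G"
      using connected_graph_closed[OF G(2) x(1), of _ "\<lambda>v. deg G v = 2"] x(2) step by blast
    then show ?thesis unfolding n_deg_def by simp
  qed simp
qed

lemma chemical_tree_max_deg_le_3_iff:
  assumes "chemical_tree G"
  shows "max_deg G \<le> 3 \<longleftrightarrow> n_deg G 4 = 0"
proof -
  have G: "simple_graph G" "connected_graph G" using assms unfolding chemical_tree_def is_tree_def by auto
  have fin: "finite (verts G)" and ne: "verts G \<noteq> {}"
    using simple_graph_finite_verts[OF G(1)] G(2) unfolding connected_graph_def by auto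
  have "max_deg G \<le> 3 \<longleftrightarrow> (\<forall>v\<in>verts G. deg G v \<le> 3)"
    unfolding max_deg_def using fin ne by simp
  also have "\<dots> \<longleftrightarrow> {v \<in> verts G. deg G v = 4} = {}"
    using assms unfolding chemical_tree_def by force
  also have "\<dots> \<longleftrightarrow> n_deg G 4 = 0" unfolding n_deg_def using fin by simp
  finally show ?thesis .
qed

section \<open>The Sombor index of chemical trees\<close>

lemma sqrt_bounds:
  "2236067 / 1000000 < sqrt 5" "sqrt 5 < 2236068 / 1000000"
  "2828427 / 1000000 < sqrt 8" "sqrt 8 < 2828428 / 1000000"
  "3162277 / 1000000 < sqrt 10" "sqrt 10 < 3162278 / 1000000"
  "3605551 / 1000000 < sqrt 13" "sqrt 13 < 3605552 / 1000000"
  "4123105 / 1000000 < sqrt 17"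
  "4242640 / 1000000 < sqrt 18" "sqrt 18 < 4242641 / 1000000"
  "4472135 / 1000000 < sqrt 20"
  "5656854 / 1000000 < sqrt 32"
  by (rule real_less_rsqrt real_less_lsqrt; simp add: power2_eq_square)+

definition sombor_excess :: "nat \<times> nat \<times> nat \<times> nat \<times> nat \<Rightarrow> real" where
  "sombor_excess m = (case m of (m33, m23, m12, m13, _) \<Rightarrow>
     m33 * (sqrt 18 - sqrt 8) + m23 * (sqrt 13 - sqrt 8) + m12 * (sqrt 5 - sqrt 8) +
     m13 * (sqrt 10 - sqrt 8))"

lemma sombor_subcubic_tree:
  assumes T: "chemical_tree G" "3 \<le> card (verts G)" "n_deg G 4 = 0"
  shows "sombor G = (real (card (verts G)) - 1) * sqrt 8 + sombor_excess (mvec G)"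
proof -
  have "m_deg G 1 4 = 0" "m_deg G 2 4 = 0" "m_deg G 3 4 = 0" "m_deg G 4 4 = 0"
    using chemical_tree_counts(6)[OF T(1,2)] T(3) by simp_all
  then show ?thesis
    unfolding sombor_chemical_tree[OF T(1,2)] sombor_excess_def mvec_def by (simp add: algebra_simps)
qed

lemma sombor_A:
  assumes "T \<in> A n k" "3 \<le> n"
  shows "sombor T = (real n - 1) * sqrt 8 + sombor_excess (Avec n k)"
  using assms sombor_subcubic_tree[of T] chemical_tree_max_deg_le_3_iff[of T]
  unfolding A_def CT_def by auto

lemma sombor_Omega:
  assumes T: "T \<in> Omega n" and n: "13 \<le> n"
  shows "sombor T = (real n - 1) * sqrt 8 + sombor_excess (2, 5, 5, 0, n - 13)"
proof -
  have G: "chemical_tree T" "card (verts T) = n" using T unfolding Omega_def CT_def by auto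
  then have "n_deg T 4 = 0" using chemical_tree_counts(2)[of T] T n unfolding Omega_def by simp
  then show ?thesis using sombor_subcubic_tree[of T] G T n unfolding Omega_def mvec_def by simp
qed

lemma Avec_image:
  "Avec n ` {1..13} = {(0,0,2,0,n-3), (0,1,1,2,n-5), (0,2,2,1,n-6), (0,3,3,0,n-7),
    (0,2,0,4,n-7), (0,3,1,3,n-8), (0,4,2,2,n-9), (1,1,1,3,n-7), (0,5,3,1,n-10),
    (1,2,2,2,n-8), (0,6,4,0,n-11), (1,3,3,1,n-9), (1,4,4,0,n-10)}"
proof -
  have "{1..13::nat} = {1, 2, 3, 4, 5, 6, 7, 8, 9, 10, 11, 12, 13}" by (auto; presburger)
  then show ?thesis by (simp add: Avec_def)
qed

text \<open>The classes \<open>A_1, \<dots>, A_13\<close> are the admissible values of \<open>(n_3, m_33, m_13)\<close>, which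
  determine the rest of \<open>mvec\<close>.\<close>

lemma Avec_cases:
  fixes n N3 m12 m13 m22 m23 m33 :: nat
  assumes "13 \<le> n" "N3 \<le> 2" "m33 \<le> 1" "N3 \<le> 1 \<Longrightarrow> m33 = 0" "m12 \<noteq> 0 \<or> m23 \<noteq> 0"
    and "m12 + m13 = N3 + 2" "m13 + m23 + 2 * m33 = 3 * N3" "m22 + 3 + 4 * N3 = n + m13 + m33"
  shows "(m33, m23, m12, m13, m22) \<in> Avec n ` {1..13}"
proof -
  have "N3 \<in> {0, 1, 2}" "m33 \<in> {0, 1}" "m13 \<in> {0, 1, 2, 3, 4}"
    using assms(2,3,6) by auto
  then show ?thesis using assms unfolding Avec_image by (elim insertE emptyE; simp; arith)
qed

lemma subcubic_tree_in_A:
  assumes T: "T \<in> CT n" and n: "13 \<le> n" and subcubic: "n_deg T 4 = 0" "n_deg T 3 \<le> 2"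
  shows "\<exists>k\<in>{1..13}. T \<in> A n k"
proof -
  have G: "chemical_tree T" "card (verts T) = n" using T unfolding CT_def by auto
  then have G3: "3 \<le> card (verts T)" using n by simp
  have sg: "simple_graph T" using G(1) unfolding chemical_tree_def is_tree_def by auto
  note counts = chemical_tree_counts[OF G(1) G3]
  have m4: "m_deg T 1 4 = 0" "m_deg T 2 4 = 0" "m_deg T 3 4 = 0" "m_deg T 4 4 = 0"
    using counts(6) subcubic(1) by simp_all
  have n1: "n_deg T 1 = n_deg T 3 + 2" using chemical_tree_n_deg_1[OF G(1) G3] subcubic(1) by simp
  have "n_deg T 3 choose 2 \<le> 1"
    using subcubic(2) by (cases "n_deg T 3 = 2") (auto simp: binomial_eq_0)
  then have m33: "m_deg T 3 3 \<le> 1" "n_deg T 3 \<le> 1 \<Longrightarrow> m_deg T 3 3 = 0"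
    using m_deg_same_le[OF sg, of 3] m_deg_same_eq_0[OF sg] by auto
  have "m_deg T 1 2 \<noteq> 0 \<or> m_deg T 2 3 \<noteq> 0"
  proof (rule ccontr)
    assume "\<not> (m_deg T 1 2 \<noteq> 0 \<or> m_deg T 2 3 \<noteq> 0)"
    then have "n_deg T 2 = 0 \<or> n_deg T 2 = n"
      using chemical_tree_deg_2_closed[OF G(1)] G3 m4 G(2) by simp
    then show False using counts(2) G(2) n1 subcubic n by linarith
  qed
  moreover have "m_deg T 1 2 + m_deg T 1 3 = n_deg T 3 + 2" using counts(3) n1 m4 by simp
  moreover have "m_deg T 1 3 + m_deg T 2 3 + 2 * m_deg T 3 3 = 3 * n_deg T 3" using counts(5) m4 by simp
  moreover have "m_deg T 2 2 + 3 + 4 * n_deg T 3 = n + m_deg T 1 3 + m_deg T 3 3"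
    using counts(1,3,5) n1 m4 G(2) by linarith
  ultimately have "mvec T \<in> Avec n ` {1..13}"
    unfolding mvec_def using Avec_cases[OF n subcubic(2) m33(1)] m33(2) by blast
  then obtain k where "k \<in> {1..13}" "mvec T = Avec n k" by blast
  moreover have "max_deg T \<le> 3" using chemical_tree_max_deg_le_3_iff[OF G(1)] subcubic(1) by simp
  ultimately show ?thesis using T subcubic(2) unfolding A_def by blast
qed

lemma subcubic_tree_in_Omega:
  assumes T: "T \<in> CT n" and n: "13 \<le> n"
    and degs: "n_deg T 4 = 0" "n_deg T 3 = 3" and m: "m_deg T 3 3 = 2" "m_deg T 1 3 = 0"
  shows "T \<in> Omega n"
proof -
  have G: "chemical_tree T" "card (verts T) = n" using T unfolding CT_def by auto
  then have G3: "3 \<le> card (verts T)" using n by simp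
  note counts = chemical_tree_counts[OF G(1) G3]
  have "m_deg T 1 4 = 0" "m_deg T 2 4 = 0" "m_deg T 3 4 = 0"
    using counts(6) degs(1) by simp_all
  moreover have "n_deg T 1 = 5" using chemical_tree_n_deg_1[OF G(1) G3] degs by simp
  ultimately have "m_deg T 1 2 = 5" "m_deg T 2 3 = 5" "n_deg T 2 = n - 8" "m_deg T 2 2 = n - 13"
    using counts degs m G(2) by linarith+
  then show ?thesis
    unfolding Omega_def using T degs m \<open>n_deg T 1 = 5\<close> by simp
qed

definition excess_bound :: "'a graph \<Rightarrow> real" where
  "excess_bound G = - 592361 / 1000000 * m_deg G 1 2 + 333849 / 1000000 * m_deg G 1 3 +
     1294677 / 1000000 * m_deg G 1 4 + 777123 / 1000000 * m_deg G 2 3 +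
     1643707 / 1000000 * m_deg G 2 4 + 1414212 / 1000000 * m_deg G 3 3 +
     2171572 / 1000000 * m_deg G 3 4 + 2828426 / 1000000 * m_deg G 4 4"

lemma sombor_lower_bound:
  assumes T: "chemical_tree G" "3 \<le> card (verts G)"
  shows "(real (card (verts G)) - 1) * sqrt 8 + excess_bound G \<le> sombor G"
proof -
  have mono: "m * c \<le> m * d" if "c \<le> d" for m :: nat and c d :: real
    using that by (simp add: mult_left_mono)
  have "m_deg G 1 2 * (- 592361 / 1000000) \<le> m_deg G 1 2 * (sqrt 5 - sqrt 8)"
    "m_deg G 1 3 * (333849 / 1000000) \<le> m_deg G 1 3 * (sqrt 10 - sqrt 8)"
    "m_deg G 1 4 * (1294677 / 1000000) \<le> m_deg G 1 4 * (sqrt 17 - sqrt 8)"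
    "m_deg G 2 3 * (777123 / 1000000) \<le> m_deg G 2 3 * (sqrt 13 - sqrt 8)"
    "m_deg G 2 4 * (1643707 / 1000000) \<le> m_deg G 2 4 * (sqrt 20 - sqrt 8)"
    "m_deg G 3 3 * (1414212 / 1000000) \<le> m_deg G 3 3 * (sqrt 18 - sqrt 8)"
    "m_deg G 3 4 * (2171572 / 1000000) \<le> m_deg G 3 4 * (5 - sqrt 8)"
    "m_deg G 4 4 * (2828426 / 1000000) \<le> m_deg G 4 4 * (sqrt 32 - sqrt 8)"
    by (rule mono, use sqrt_bounds in linarith)+
  then show ?thesis unfolding sombor_chemical_tree[OF T] excess_bound_def by linarith
qed

text \<open>Eliminating \<open>m_12 = n_1 - m_13 - m_14\<close> and \<open>n_1 = n_3 + 2 n_4 + 2\<close>, and charging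
  \<open>0.777\<close> to each of the \<open>3 n_3 + 4 n_4\<close> edge ends at branching vertices, the bound becomes
  \<open>1.739 n_3 + 1.924 n_4 - 1.185 - 0.140 m_33\<close> plus nonnegative multiples of the other
  \<open>m_ij\<close>; among trees with \<open>n_4 = 0\<close> and \<open>n_3 = 3\<close> the minimum is attained exactly on
  \<open>\<Omega>(n)\<close>.\<close>

lemma excess_bound_gt:
  assumes T: "chemical_tree G" "3 \<le> card (verts G)"
    and cases: "2 \<le> n_deg G 4 \<or> n_deg G 4 = 1 \<or> n_deg G 4 = 0 \<and> 4 \<le> n_deg G 3 \<or>
      n_deg G 4 = 0 \<and> n_deg G 3 = 3 \<and> (m_deg G 3 3 \<noteq> 2 \<or> m_deg G 1 3 \<noteq> 0)"
  shows "3752300 / 1000000 < excess_bound G"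
proof -
  have G: "simple_graph G" "acyclic_graph G" using T(1) unfolding chemical_tree_def is_tree_def by auto
  note R = chemical_tree_counts[OF T, THEN arg_cong[where f = real],
    unfolded of_nat_add of_nat_mult of_nat_numeral of_nat_1]
  have m44: "n_deg G 4 = 1 \<Longrightarrow> m_deg G 4 4 = 0" using m_deg_same_eq_0[OF G(1)] by simp
  have m33: "n_deg G 3 = 3 \<Longrightarrow> m_deg G 3 3 \<le> 2" using acyclic_m_deg_same_le_2[OF G] .
  from cases consider "2 \<le> real (n_deg G 4)" | "real (n_deg G 4) = 1" "m_deg G 4 4 = 0"
    | "n_deg G 4 = 0" "4 \<le> real (n_deg G 3)"
    | "n_deg G 4 = 0" "real (n_deg G 3) = 3" "real (m_deg G 3 3) \<le> 1 \<or> 1 \<le> real (m_deg G 1 3)"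
        "real (m_deg G 3 3) \<le> 2"
    using m44 m33 by fastforce
  then show ?thesis unfolding excess_bound_def using R by cases linarith+
qed

lemma sombor_outside_gt_Omega:
  assumes T: "T \<in> CT n" and n: "13 \<le> n" and outside: "T \<notin> (\<Union>i\<in>{1..13}. A n i) \<union> Omega n"
  shows "(real n - 1) * sqrt 8 + sombor_excess (2, 5, 5, 0, n - 13) < sombor T"
proof -
  have G: "chemical_tree T" "3 \<le> card (verts T)" "card (verts T) = n"
    using T n unfolding CT_def by auto
  have "\<not> (n_deg T 4 = 0 \<and> n_deg T 3 \<le> 2)"
    using subcubic_tree_in_A[OF T n] outside by blast
  moreover have "\<not> (n_deg T 4 = 0 \<and> n_deg T 3 = 3 \<and> m_deg T 3 3 = 2 \<and> m_deg T 1 3 = 0)"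
    using subcubic_tree_in_Omega[OF T n] outside by blast
  ultimately have "3752300 / 1000000 < excess_bound T"
    by (intro excess_bound_gt[OF G(1,2)]) linarith
  moreover have "sombor_excess (2, 5, 5, 0, n - 13) \<le> 3752300 / 1000000"
    using sqrt_bounds unfolding sombor_excess_def by simp
  ultimately show ?thesis using sombor_lower_bound[OF G(1,2), unfolded G(3)] by linarith
qed

lemma sombor_excess_chain:
  "sombor_excess (Avec n 1) < sombor_excess (Avec n 4) \<and>
   sombor_excess (Avec n 4) < sombor_excess (Avec n 3) \<and>
   sombor_excess (Avec n 3) < sombor_excess (Avec n 2) \<and>
   sombor_excess (Avec n 2) < sombor_excess (Avec n 13) \<and>
   sombor_excess (Avec n 13) < sombor_excess (Avec n 11) \<and>
   sombor_excess (Avec n 11) < sombor_excess (Avec n 12) \<and>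
   sombor_excess (Avec n 12) < sombor_excess (Avec n 9) \<and>
   sombor_excess (Avec n 9) < sombor_excess (Avec n 10) \<and>
   sombor_excess (Avec n 10) < sombor_excess (Avec n 7) \<and>
   sombor_excess (Avec n 7) < sombor_excess (Avec n 8) \<and>
   sombor_excess (Avec n 8) < sombor_excess (Avec n 6) \<and>
   sombor_excess (Avec n 6) < sombor_excess (Avec n 5) \<and>
   sombor_excess (Avec n 5) < sombor_excess (2, 5, 5, 0, m)"
  using sqrt_bounds unfolding sombor_excess_def Avec_def by simp

theorem theorem3p3:
  fixes n :: nat and T1 T2 T3 T4 T5 T6 T7 T8 T9 T10 T11 T12 T13 T14 T :: "'a graph"
  assumes "n \<ge> 13"
    and "T1 \<in> A n 1" and "T2 \<in> A n 4" and "T3 \<in> A n 3" and "T4 \<in> A n 2"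
    and "T5 \<in> A n 13" and "T6 \<in> A n 11" and "T7 \<in> A n 12" and "T8 \<in> A n 9"
    and "T9 \<in> A n 10" and "T10 \<in> A n 7" and "T11 \<in> A n 8" and "T12 \<in> A n 6"
    and "T13 \<in> A n 5" and "T14 \<in> Omega n"
    and "T \<in> CT n" and "T \<notin> (\<Union>i\<in>{1..13}. A n i) \<union> Omega n"
  shows "sombor T1 < sombor T2 \<and> sombor T2 < sombor T3 \<and> sombor T3 < sombor T4 \<and>
         sombor T4 < sombor T5 \<and> sombor T5 < sombor T6 \<and> sombor T6 < sombor T7 \<and>
         sombor T7 < sombor T8 \<and> sombor T8 < sombor T9 \<and> sombor T9 < sombor T10 \<and>
         sombor T10 < sombor T11 \<and> sombor T11 < sombor T12 \<and> sombor T12 < sombor T13 \<and>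
         sombor T13 < sombor T14 \<and> sombor T14 < sombor T"
proof -
  have n: "3 \<le> n" using assms(1) by simp
  show ?thesis
    using sombor_excess_chain[of n "n - 13"] sombor_outside_gt_Omega[OF assms(16,1,17)]
      sombor_Omega[OF assms(15,1)] sombor_A[OF assms(2) n] sombor_A[OF assms(3) n]
      sombor_A[OF assms(4) n] sombor_A[OF assms(5) n] sombor_A[OF assms(6) n]
      sombor_A[OF assms(7) n] sombor_A[OF assms(8) n] sombor_A[OF assms(9) n]
      sombor_A[OF assms(10) n] sombor_A[OF assms(11) n] sombor_A[OF assms(12) n]
      sombor_A[OF assms(13) n] sombor_A[OF assms(14) n]
    by simp
qed

end
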